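(* Let $(\epsilon_\ell)_{\ell\in\mathbb{N}}$ be independent random variables, each exponentially distributed with parameter $1$. For $m\in\mathbb{N}$ let $Y_m$ be a random variable on $[0,1]$ with density $f_m(q)=2\sum_{\ell=1}^{m}(-1)^{\ell-1}\frac{\binom{m}{\ell}}{\binom{m+\ell}{m}}\ell^2q^{\ell^2-1}$, and let $W$ be a random variable on $[0,1]$ with $\mathbb{P}\{W\le q\}=1-\Theta(q)$ for $0\le q<1$, where $\Theta(q)=\sum_{n\in\mathbb{Z}}(-1)^nq^{n^2}$. Then \[ Y_m\overset{d}{=}\exp\Big(-\sum_{\ell=1}^{m}\frac{\epsilon_\ell}{\ell^2}\Big),\qquad W\overset{d}{=}\exp\Big(-\sum_{\ell=1}^{\infty}\frac{\epsilon_\ell}{\ell^2}\Big). \]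
   Context: $Y_m$ and $W$ arise as limit laws of the number of remaining white balls in the urn where, from $n'$ white and $m'$ black balls, a white ball is drawn with probability $n'/(n'+m'^2)$ and a black one otherwise (drawn balls discarded); this interpretation is not needed for the statement. $\overset{d}{=}$ denotes equality in distribution. *)

theory Defs
  imports "HOL-Probability.Probability"
begin

definition f_dens :: "nat \<Rightarrow> real \<Rightarrow> real" where
  "f_dens m q = 2 * (\<Sum>l=1..m. (-1) ^ (l - 1) * (real (m choose l) / real ((m + l) choose m))
                      * real (l^2) * q ^ (l^2 - 1))"

definition Theta :: "real \<Rightarrow> real" where
  "Theta q = (\<Sum>\<^sub>\<infinity> n::int. (-1::real) ^ nat \<bar>n\<bar> * q ^ nat (n^2))"

end

theory Submission
  imports Defs "HOL-Real_Asymp.Real_Asymp"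
begin

text \<open>
  Let \<open>T(m) = (\<Sum>l=1..m. \<epsilon>(l) / l\<^sup>2)\<close>. Convolving with the exponential law of
  \<open>\<epsilon>(m+1) / (m+1)\<^sup>2\<close> one shows by induction on \<open>m\<close> that
  \<open>P(T(m) \<ge> s) = (\<Sum>l. c(m,l) exp(-l\<^sup>2 s))\<close> for \<open>s > 0\<close>, where
  \<open>c(m,l) = 2 (-1)\<^sup>l\<^sup>-\<^sup>1 C(m,l) / C(m+l,m)\<close>; the induction closes because
  \<open>c(m+1,l) = c(m,l) (m+1)\<^sup>2 / ((m+1)\<^sup>2 - l\<^sup>2)\<close> and \<open>(\<Sum>l. c(m,l)) = 1\<close>.
  Substituting \<open>s = -ln q\<close>, the distribution function of \<open>exp(-T(m))\<close> on \<open>[0,1]\<close> is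
  \<open>\<Sum>l. c(m,l) q^(l\<^sup>2)\<close>, whose derivative is \<open>f_dens m\<close>.

  As \<open>m \<rightarrow> \<infinity>\<close>, \<open>c(m,l) \<rightarrow> 2 (-1)\<^sup>l\<^sup>-\<^sup>1\<close> with \<open>|c(m,l)| \<le> 2\<close>, so by Tannery's theorem
  these distribution functions converge to \<open>1 - \<Theta>(q)\<close>. Almost surely \<open>T(m)\<close> increases to
  the finite series \<open>T(\<infinity>)\<close>; this gives the lower bound for \<open>P(exp(-T(\<infinity>)) \<le> q)\<close>, and
  Fatou's lemma, applied at every \<open>q' > q\<close>, together with the continuity of \<open>\<Theta>\<close> gives the
  upper bound.
\<close>

section \<open>The coefficients\<close>

definition binom_ratio :: "nat \<Rightarrow> nat \<Rightarrow> real" where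
  "binom_ratio m l = real (m choose l) / real ((m + l) choose m)"

lemma binom_ratio_0 [simp]: "binom_ratio m 0 = 1"
  by (simp add: binom_ratio_def)

lemma binom_ratio_fact:
  assumes "l \<le> m"
  shows "binom_ratio m l = fact m ^ 2 / (fact (m - l) * fact (m + l))"
  using assms by (simp add: binom_ratio_def binomial_fact field_simps power2_eq_square)

lemma binom_ratio_central:
  assumes "l \<le> m"
  shows "binom_ratio m l = real ((2 * m) choose (m + l)) / real ((2 * m) choose m)"
proof -
  have "2 * m - (m + l) = m - l"
    by simp
  then show ?thesis
    using assms by (simp add: binom_ratio_fact binomial_fact field_simps power2_eq_square mult_2)
qed

lemma binom_ratio_nonneg: "0 \<le> binom_ratio m l"
  by (simp add: binom_ratio_def)

lemma binom_ratio_le_1: "binom_ratio m l \<le> 1"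
proof -
  have "m choose l \<le> (m + l) choose l"
    by (rule binomial_right_mono) simp
  also have "\<dots> = (m + l) choose m"
    using binomial_symmetric[of l "m + l"] by simp
  finally show ?thesis
    by (simp add: binom_ratio_def divide_le_eq_1)
qed

lemma binom_ratio_Suc_right:
  assumes "l < m"
  shows "binom_ratio m (Suc l) = binom_ratio m l * (real m - real l) / (real m + real l + 1)"
proof -
  have "fact (m - l) = (real m - real l) * fact (m - Suc l)"
    using assms by (simp add: Suc_diff_Suc[symmetric])
  moreover have "fact (m + Suc l) = (real m + real l + 1) * (fact (m + l) :: real)"
    by simp
  moreover have "real m - real l > 0"
    using assms by simp
  ultimately show ?thesis
    using assms by (simp add: binom_ratio_fact divide_simps del: fact_Suc)
qed

lemma binom_ratio_Suc_left:
  assumes "l \<le> m"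
  shows "binom_ratio (Suc m) l = binom_ratio m l * real (Suc m) ^ 2 / (real (Suc m) ^ 2 - real l ^ 2)"
proof -
  have "fact (Suc m - l) = (real (Suc m) - real l) * fact (m - l)"
    using assms by (simp add: Suc_diff_le)
  moreover have "fact (Suc m + l) = (real (Suc m) + real l) * (fact (m + l) :: real)"
    by (simp add: add.commute)
  moreover have "real (Suc m) ^ 2 - real l ^ 2 = (real (Suc m) - real l) * (real (Suc m) + real l)"
    by (simp add: power2_eq_square algebra_simps)
  moreover have "real (Suc m) - real l > 0"
    using assms by simp
  moreover have "fact (Suc m) ^ 2 = (fact m) ^ 2 * (real (Suc m)) ^ 2"
    by (simp add: power_mult_distrib)
  ultimately show ?thesis
    using assms by (simp add: binom_ratio_fact divide_simps del: fact_Suc of_nat_Suc)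
qed

lemma binom_ratio_tendsto_1: "(\<lambda>m. binom_ratio m l) \<longlonglongrightarrow> 1"
proof (induction l)
  case (Suc l)
  have "(\<lambda>m. (real m - real l) / (real m + real l + 1)) \<longlonglongrightarrow> 1"
    by real_asymp
  with Suc have "(\<lambda>m. binom_ratio m l * ((real m - real l) / (real m + real l + 1))) \<longlonglongrightarrow> 1"
    using tendsto_mult by fastforce
  then show ?case
    by (rule Lim_transform_eventually)
      (use eventually_gt_at_top[of l] in \<open>eventually_elim, simp add: binom_ratio_Suc_right\<close>)
qed simp

lemma sum_alternating_choose_Suc:
  "(\<Sum>k\<le>j. (-1) ^ k * of_nat (Suc n choose k)) = ((-1) ^ j * of_nat (n choose j) :: 'a::comm_ring_1)"
  by (induction j) (simp_all add: algebra_simps)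

definition hypoexp_coeff :: "nat \<Rightarrow> nat \<Rightarrow> real" where
  "hypoexp_coeff m l = 2 * (-1) ^ (l - 1) * binom_ratio m l"

lemma hypoexp_coeff_Suc_left:
  assumes "l \<le> m"
  shows "hypoexp_coeff (Suc m) l = hypoexp_coeff m l * real (Suc m) ^ 2 / (real (Suc m) ^ 2 - real l ^ 2)"
  using assms by (simp add: hypoexp_coeff_def binom_ratio_Suc_left)

lemma abs_hypoexp_coeff_le: "\<bar>hypoexp_coeff m l\<bar> \<le> 2"
  using binom_ratio_nonneg[of m l] binom_ratio_le_1[of m l] by (simp add: hypoexp_coeff_def abs_mult)

lemma sum_hypoexp_coeff:
  assumes "m \<ge> 1"
  shows "(\<Sum>l=1..m. hypoexp_coeff m l) = 1"
proof -
  obtain n where m: "m = Suc n"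
    using assms by (cases m) auto
  have "(2 * m) choose m = ((2 * n + 1) choose Suc n) + ((2 * n + 1) choose n)"
    by (simp add: m)
  also have "(2 * n + 1) choose Suc n = (2 * n + 1) choose n"
    using binomial_symmetric[of "Suc n" "2 * n + 1"] by simp
  finally have central: "real ((2 * m) choose m) = 2 * real ((2 * n + 1) choose n)"
    by simp
  have "(\<Sum>l=1..m. 2 * (-1) ^ (l - 1) * real ((2 * m) choose (m + l)))
      = (\<Sum>k\<le>n. 2 * (-1) ^ n * ((-1) ^ k * real ((2 * m) choose k)))"
  proof (rule sum.reindex_bij_witness[where i = "\<lambda>k. m - k" and j = "\<lambda>l. m - l"])
    fix l assume l: "l \<in> {1..m}"
    have "(2 * m) choose (m - l) = (2 * m) choose (2 * m - (m - l))"
      by (rule binomial_symmetric) simp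
    also have "2 * m - (m - l) = m + l"
      using l by simp
    finally have "(2 * m) choose (m - l) = (2 * m) choose (m + l)" .
    moreover have "(-1::real) ^ n * (-1) ^ (m - l) = (-1) ^ (l - 1)"
    proof -
      have "n + (m - l) = 2 * (m - l) + (l - 1)"
        using l m by auto
      then show ?thesis
        by (simp only: flip: power_add) (simp add: power_add power_mult)
    qed
    ultimately show "2 * (-1) ^ n * ((-1) ^ (m - l) * real ((2 * m) choose (m - l)))
        = 2 * (-1) ^ (l - 1) * real ((2 * m) choose (m + l))"
      by (metis mult.assoc)
  qed (use m in auto)
  also have "\<dots> = 2 * (-1) ^ n * (\<Sum>k\<le>n. (-1) ^ k * real (Suc (2 * n + 1) choose k))"
    by (simp add: sum_distrib_left m)
  also have "\<dots> = real ((2 * m) choose m)"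
    by (simp add: sum_alternating_choose_Suc central flip: power_add)
  finally show ?thesis
    by (simp add: hypoexp_coeff_def binom_ratio_central flip: sum_divide_distrib)
qed

section \<open>The hypoexponential tail\<close>

definition hypoexp_tail :: "nat \<Rightarrow> real \<Rightarrow> real" where
  "hypoexp_tail m s = (\<Sum>l=1..m. hypoexp_coeff m l * exp (- (real l ^ 2 * s)))"

lemma exp_convolution_has_integral:
  fixes a b s :: real
  assumes "a \<noteq> b" "0 \<le> s"
  shows "((\<lambda>z. exp (- (b * z)) * exp (- (a * (s - z))))
           has_integral (exp (- (a * s)) - exp (- (b * s))) / (b - a)) {0..s}"
proof -
  define F where "F z = exp (- (a * s)) * exp ((a - b) * z) / (a - b)" for z
  have "(F has_real_derivative exp (- (b * z)) * exp (- (a * (s - z)))) (at z)" for z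
  proof -
    have "(F has_real_derivative exp (- (a * s)) * (exp ((a - b) * z) * (a - b)) / (a - b)) (at z)"
      unfolding F_def by (auto intro!: derivative_eq_intros)
    moreover have "exp (- (a * s)) * exp ((a - b) * z) = exp (- (b * z)) * exp (- (a * (s - z)))"
      by (simp flip: exp_add add: algebra_simps)
    ultimately show ?thesis
      using assms by simp
  qed
  then have "((\<lambda>z. exp (- (b * z)) * exp (- (a * (s - z)))) has_integral F s - F 0) {0..s}"
    using assms by (intro fundamental_theorem_of_calculus)
      (auto simp: has_real_derivative_iff_has_vector_derivative[symmetric] intro: has_field_derivative_at_within)
  moreover have "F s - F 0 = (exp (- (a * s)) - exp (- (b * s))) / (b - a)"
    using assms by (simp add: F_def divide_simps flip: exp_add) (simp add: algebra_simps)
  ultimately show ?thesis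
    by simp
qed

lemma hypoexp_tail_Suc_has_integral:
  fixes m :: nat and s :: real
  defines "r \<equiv> real (Suc m) ^ 2"
  assumes "0 \<le> s"
  shows "((\<lambda>z. r * exp (- (r * z)) * hypoexp_tail m (s - z))
           has_integral hypoexp_tail (Suc m) s - exp (- (r * s))) {0..s}"
proof -
  let ?e = "\<lambda>l z. exp (- (real l ^ 2 * z))"
  have summand: "((\<lambda>z. hypoexp_coeff m l * r * (exp (- (r * z)) * ?e l (s - z)))
      has_integral hypoexp_coeff (Suc m) l * (?e l s - exp (- (r * s)))) {0..s}"
    if l: "l \<in> {1..m}" for l
  proof -
    have "real l ^ 2 < r"
      using l by (simp add: r_def power_strict_mono)
    then have "((\<lambda>z. exp (- (r * z)) * ?e l (s - z))
        has_integral (?e l s - exp (- (r * s))) / (r - real l ^ 2)) {0..s}"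
      using assms(2) by (intro exp_convolution_has_integral) auto
    from has_integral_mult_right[OF this, of "hypoexp_coeff m l * r"] show ?thesis
      using l by (simp add: hypoexp_coeff_Suc_left r_def)
  qed
  have "((\<lambda>z. \<Sum>l=1..m. hypoexp_coeff m l * r * (exp (- (r * z)) * ?e l (s - z)))
      has_integral (\<Sum>l=1..m. hypoexp_coeff (Suc m) l * (?e l s - exp (- (r * s))))) {0..s}"
    by (rule has_integral_sum) (use summand in auto)
  moreover have "(\<Sum>l=1..m. hypoexp_coeff m l * r * (exp (- (r * z)) * ?e l (s - z)))
      = r * exp (- (r * z)) * hypoexp_tail m (s - z)" for z
    by (simp add: hypoexp_tail_def sum_distrib_left mult_ac)
  moreover have "(\<Sum>l=1..m. hypoexp_coeff (Suc m) l * (?e l s - exp (- (r * s))))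
      = hypoexp_tail (Suc m) s - exp (- (r * s))"
  proof -
    have "(\<Sum>l=1..m. hypoexp_coeff (Suc m) l) = 1 - hypoexp_coeff (Suc m) (Suc m)"
      using sum_hypoexp_coeff[of "Suc m"] by simp
    then show ?thesis
      by (simp add: hypoexp_tail_def r_def algebra_simps sum_subtractf flip: sum_distrib_right)
        (simp flip: distrib_right)
  qed
  ultimately show ?thesis
    by simp
qed

section \<open>Weighted sums of independent exponential variables\<close>

lemma nn_integral_exponential_density_greaterThan:
  fixes r s :: real
  assumes "0 < r" "0 \<le> s"
  shows "(\<integral>\<^sup>+z. ennreal (exponential_density r z) * indicator {s<..} z \<partial>lborel) = ennreal (exp (- (r * s)))"
proof -
  let ?D = "density lborel (exponential_density r)"
  interpret D: prob_space ?D
    using prob_space_exponential_density[OF assms(1)] by simp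
  have "(\<integral>\<^sup>+z. ennreal (exponential_density r z) * indicator {s<..} z \<partial>lborel) = emeasure ?D (space ?D - {..s})"
    by (simp add: emeasure_density Compl_eq_Diff_UNIV[symmetric])
  also have "\<dots> = emeasure ?D (space ?D) - emeasure ?D {..s}"
    by (rule emeasure_compl) auto
  also have "\<dots> = ennreal (exp (- (r * s)))"
    using assms D.emeasure_space_1
    by (simp add: emeasure_erlang_density erlang_CDF_0 ennreal_minus mult.commute flip: ennreal_1)
  finally show ?thesis .
qed

lemma (in prob_space) emeasure_add_ge_convolution:
  fixes Z X :: "'a \<Rightarrow> real"
  assumes indep: "indep_var borel Z borel X"
    and Z: "distributed M lborel Z g"
    and [measurable]: "X \<in> borel_measurable M"
  shows "emeasure M {x \<in> space M. s \<le> Z x + X x}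
           = (\<integral>\<^sup>+z. g z * prob {x \<in> space M. s - z \<le> X x} \<partial>lborel)"
proof -
  have [measurable]: "Z \<in> borel_measurable M" "g \<in> borel_measurable lborel"
    using distributed_measurable[OF Z] distributed_borel_measurable[OF Z] by simp_all
  have "emeasure M {x \<in> space M. s \<le> Z x + X x} = emeasure (distr M borel (\<lambda>x. Z x + X x)) {s..}"
    by (subst emeasure_distr) (auto intro!: arg_cong[where f = "emeasure M"])
  also have "distr M borel (\<lambda>x. Z x + X x) = (distr M borel Z \<star> distr M borel X)"
    by (rule sum_indep_random_variable[OF indep]) auto
  also have "emeasure (distr M borel Z \<star> distr M borel X) {s..}
      = \<integral>\<^sup>+z. emeasure (distr M borel X) {a. a + z \<in> {s..}} \<partial>distr M borel Z"
    by (rule convolution_emeasure) (auto intro!: prob_space.finite_measure prob_space_distr)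
  also have "\<dots> = \<integral>\<^sup>+z. prob {x \<in> space M. s - z \<le> X x} \<partial>distr M borel Z"
    by (intro nn_integral_cong)
      (auto simp: emeasure_distr emeasure_eq_measure intro!: arg_cong[where f = prob])
  also have "distr M borel Z = density lborel g"
    using distributed_distr_eq_density[OF Z] by (simp cong: distr_cong)
  also have "(\<integral>\<^sup>+z. prob {x \<in> space M. s - z \<le> X x} \<partial>density lborel g)
      = \<integral>\<^sup>+z. g z * prob {x \<in> space M. s - z \<le> X x} \<partial>lborel"
    by (simp add: nn_integral_density)
  finally show ?thesis .
qed

locale iid_exponential = prob_space M for M :: "'a measure" +
  fixes eps :: "nat \<Rightarrow> 'a \<Rightarrow> real"
  assumes indep_eps: "indep_vars (\<lambda>_. borel) eps UNIV"
    and eps_exponential: "\<And>l. distributed M lborel (eps l) (exponential_density 1)"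
begin

definition weighted_sum :: "nat \<Rightarrow> 'a \<Rightarrow> real" where
  "weighted_sum m x = (\<Sum>l=1..m. eps l x / real l ^ 2)"

lemma eps_measurable [measurable]: "eps l \<in> borel_measurable M"
  using distributed_measurable[OF eps_exponential[of l]] by simp

lemma weighted_sum_measurable [measurable]: "weighted_sum m \<in> borel_measurable M"
  unfolding weighted_sum_def by measurable

lemma AE_eps_nonneg: "AE x in M. \<forall>l. 0 \<le> eps l x"
proof -
  have "AE x in M. 0 \<le> eps l x" for l
    using distributed_AE2[OF eps_exponential[of l], of "\<lambda>x. 0 \<le> x"]
    by (auto simp: exponential_density_def)
  then show ?thesis
    by (simp add: AE_all_countable)
qed

lemma AE_weighted_sum_nonneg: "AE x in M. 0 \<le> weighted_sum m x"
  using AE_eps_nonneg by eventually_elim (auto simp: weighted_sum_def intro!: sum_nonneg)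

lemma weighted_sum_Suc: "weighted_sum (Suc m) x = eps (Suc m) x / real (Suc m) ^ 2 + weighted_sum m x"
  by (simp add: weighted_sum_def)

lemma indep_var_weighted_sum:
  "indep_var borel (\<lambda>x. eps (Suc m) x / real (Suc m) ^ 2) borel (weighted_sum m)"
proof -
  have "indep_vars (\<lambda>_. borel) (\<lambda>i x. eps i x / real i ^ 2) UNIV"
    by (rule indep_vars_compose2[OF indep_eps]) measurable
  then have "indep_vars (\<lambda>_. borel) (\<lambda>i x. eps i x / real i ^ 2) (insert (Suc m) {1..m})"
    by (rule indep_vars_subset) auto
  from indep_vars_sum[OF _ _ this] show ?thesis
    by (simp add: weighted_sum_def[abs_def])
qed

lemma eps_scaled_exponential:
  assumes "l \<ge> 1"
  shows "distributed M lborel (\<lambda>x. eps l x / real l ^ 2) (exponential_density (real l ^ 2))"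
  using erlang_distributed_mult_const[OF eps_exponential, of "1 / real l ^ 2" l] assms
  by simp

lemma prob_weighted_sum_ge_nonpos:
  assumes "s \<le> 0"
  shows "prob {x \<in> space M. s \<le> weighted_sum m x} = 1"
  using AE_weighted_sum_nonneg[of m] assms
  by (subst prob_Collect_eq_1) (auto elim!: eventually_mono)

lemma emeasure_weighted_sum_Suc_ge:
  fixes m :: nat
  defines "r \<equiv> real (Suc m) ^ 2"
  assumes IH: "\<And>u. 0 < u \<Longrightarrow> prob {x \<in> space M. u \<le> weighted_sum m x} = hypoexp_tail m u"
    and s: "0 < s"
  shows "emeasure M {x \<in> space M. s \<le> weighted_sum (Suc m) x}
           = ennreal (exp (- (r * s)))
             + (\<integral>\<^sup>+z. ennreal (indicator {0<..<s} z * (r * exp (- (r * z)) * hypoexp_tail m (s - z))) \<partial>lborel)"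
proof -
  define g where "g = exponential_density r"
  have "emeasure M {x \<in> space M. s \<le> weighted_sum (Suc m) x}
      = \<integral>\<^sup>+z. ennreal (g z) * prob {x \<in> space M. s - z \<le> weighted_sum m x} \<partial>lborel"
    unfolding weighted_sum_Suc g_def r_def
    by (rule emeasure_add_ge_convolution[OF indep_var_weighted_sum eps_scaled_exponential]) simp_all
  also have "\<dots> = \<integral>\<^sup>+z. ennreal (g z) * indicator {s<..} z
      + ennreal (indicator {0<..<s} z * (r * exp (- (r * z)) * hypoexp_tail m (s - z))) \<partial>lborel"
  proof (rule nn_integral_cong_AE)
    show "AE z in lborel. ennreal (g z) * prob {x \<in> space M. s - z \<le> weighted_sum m x}
        = ennreal (g z) * indicator {s<..} z
          + ennreal (indicator {0<..<s} z * (r * exp (- (r * z)) * hypoexp_tail m (s - z)))"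
      using AE_lborel_singleton[of 0] AE_lborel_singleton[of s]
    proof eventually_elim
      case (elim z)
      consider "z < 0" | "0 < z" "z < s" | "s < z"
        using elim by linarith
      then show ?case
      proof cases
        case 2
        then have "g z * prob {x \<in> space M. s - z \<le> weighted_sum m x}
            = r * exp (- (r * z)) * hypoexp_tail m (s - z)"
          using IH[of "s - z"] by (simp add: g_def exponential_density_def mult_ac)
        then show ?thesis
          using 2 by (simp flip: ennreal_mult'')
      qed (simp_all add: g_def exponential_density_def prob_weighted_sum_ge_nonpos)
    qed
  qed
  also have "\<dots> = (\<integral>\<^sup>+z. ennreal (g z) * indicator {s<..} z \<partial>lborel)
      + (\<integral>\<^sup>+z. ennreal (indicator {0<..<s} z * (r * exp (- (r * z)) * hypoexp_tail m (s - z))) \<partial>lborel)"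
    by (rule nn_integral_add) (auto simp: g_def hypoexp_tail_def)
  also have "(\<integral>\<^sup>+z. ennreal (g z) * indicator {s<..} z \<partial>lborel) = ennreal (exp (- (r * s)))"
    using nn_integral_exponential_density_greaterThan[of r s] s by (simp add: g_def r_def)
  finally show ?thesis .
qed

lemma prob_weighted_sum_Suc_ge:
  assumes IH: "\<And>u. 0 < u \<Longrightarrow> prob {x \<in> space M. u \<le> weighted_sum m x} = hypoexp_tail m u"
    and s: "0 < s"
  shows "prob {x \<in> space M. s \<le> weighted_sum (Suc m) x} = hypoexp_tail (Suc m) s"
proof -
  define r where "r = real (Suc m) ^ 2"
  define k where "k z = r * exp (- (r * z)) * hypoexp_tail m (s - z)" for z
  have k_integral: "(k has_integral hypoexp_tail (Suc m) s - exp (- (r * s))) {0<..<s}"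
    using hypoexp_tail_Suc_has_integral[of s m] s
    by (simp add: k_def[abs_def] r_def has_integral_Icc_iff_Ioo)
  have k_nonneg: "0 \<le> k z" if "z \<in> {0<..<s}" for z
  proof -
    have "0 \<le> hypoexp_tail m (s - z)"
      using that by (simp flip: IH)
    then show ?thesis
      by (simp add: k_def r_def)
  qed
  then have integral_nonneg: "0 \<le> hypoexp_tail (Suc m) s - exp (- (r * s))"
    using has_integral_nonneg[OF k_integral] by blast
  have "ennreal (prob {x \<in> space M. s \<le> weighted_sum (Suc m) x})
      = ennreal (exp (- (r * s))) + ennreal (hypoexp_tail (Suc m) s - exp (- (r * s)))"
    using emeasure_weighted_sum_Suc_ge[OF IH s] nn_integral_has_integral_lebesgue[OF k_nonneg k_integral]
    by (simp add: emeasure_eq_measure k_def r_def)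
  then have "ennreal (prob {x \<in> space M. s \<le> weighted_sum (Suc m) x}) = ennreal (hypoexp_tail (Suc m) s)"
    using integral_nonneg by (simp flip: ennreal_plus)
  moreover have "0 \<le> hypoexp_tail (Suc m) s"
    using integral_nonneg exp_gt_zero[of "- (r * s)"] by linarith
  ultimately show ?thesis
    by simp
qed

lemma prob_weighted_sum_ge:
  assumes "0 < s"
  shows "prob {x \<in> space M. s \<le> weighted_sum m x} = hypoexp_tail m s"
  using assms
proof (induction m arbitrary: s)
  case 0
  then show ?case
    by (simp add: weighted_sum_def hypoexp_tail_def)
next
  case (Suc m)
  then show ?case
    by (rule prob_weighted_sum_Suc_ge)
qed

end

section \<open>The law of \<open>Y\<^sub>m\<close>\<close>

definition Y_cdf :: "nat \<Rightarrow> real \<Rightarrow> real" where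
  "Y_cdf m q = (\<Sum>l=1..m. hypoexp_coeff m l * q ^ (l ^ 2))"

lemma Y_cdf_has_real_derivative: "(Y_cdf m has_real_derivative f_dens m q) (at q)"
proof -
  have "(Y_cdf m has_real_derivative (\<Sum>l=1..m. hypoexp_coeff m l * (real (l ^ 2) * q ^ (l ^ 2 - 1)))) (at q)"
    unfolding Y_cdf_def[abs_def] by (auto intro!: derivative_eq_intros sum.cong simp: mult_ac)
  also have "(\<Sum>l=1..m. hypoexp_coeff m l * (real (l ^ 2) * q ^ (l ^ 2 - 1))) = f_dens m q"
    by (simp add: f_dens_def hypoexp_coeff_def binom_ratio_def sum_distrib_left mult_ac)
  finally show ?thesis .
qed

lemma f_dens_measurable [measurable]: "f_dens m \<in> borel_measurable borel"
  unfolding f_dens_def by measurable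

lemma Y_cdf_0 [simp]: "Y_cdf m 0 = 0"
  by (auto simp: Y_cdf_def intro!: sum.neutral)

lemma Y_cdf_1:
  assumes "m \<ge> 1"
  shows "Y_cdf m 1 = 1"
  using sum_hypoexp_coeff[OF assms] by (simp add: Y_cdf_def)

lemma hypoexp_tail_minus_ln:
  assumes "0 < q"
  shows "hypoexp_tail m (- ln q) = Y_cdf m q"
proof -
  have "exp (- (real l ^ 2 * - ln q)) = q ^ (l ^ 2)" for l
    using assms by (simp add: exp_of_nat_mult flip: of_nat_power)
  then show ?thesis
    by (simp add: hypoexp_tail_def Y_cdf_def)
qed

context iid_exponential
begin

lemma prob_exp_neg_weighted_sum_le:
  assumes "m \<ge> 1"
  shows "prob {x \<in> space M. exp (- weighted_sum m x) \<le> q} = Y_cdf m (max 0 (min q 1))"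
proof (cases "0 < q")
  case True
  have "{x \<in> space M. exp (- weighted_sum m x) \<le> q} = {x \<in> space M. - ln q \<le> weighted_sum m x}"
    using True by (auto simp flip: ln_le_cancel_iff)
  moreover have "prob {x \<in> space M. - ln q \<le> weighted_sum m x} = Y_cdf m (max 0 (min q 1))"
  proof (cases "q < 1")
    case True
    then show ?thesis
      using \<open>0 < q\<close> by (simp add: prob_weighted_sum_ge hypoexp_tail_minus_ln)
  next
    case False
    then show ?thesis
      using assms by (simp add: prob_weighted_sum_ge_nonpos Y_cdf_1)
  qed
  ultimately show ?thesis
    by simp
next
  case False
  then have "{x \<in> space M. exp (- weighted_sum m x) \<le> q} = {}"
    by (auto simp: not_less) (metis exp_gt_zero linorder_not_le order_trans)
  with False show ?thesis
    by (simp only:) simp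
qed

text \<open>
  Monotonicity of \<open>Y_cdf m\<close>, and with it the nonnegativity of \<open>f_dens m\<close>, is read off from
  the probabilistic interpretation; it is not evident from the alternating sum.
\<close>

lemma mono_on_Y_cdf:
  assumes "m \<ge> 1"
  shows "mono_on {0..1} (Y_cdf m)"
proof (rule mono_onI)
  fix a b :: real
  assume ab: "a \<in> {0..1}" "b \<in> {0..1}" "a \<le> b"
  have "prob {x \<in> space M. exp (- weighted_sum m x) \<le> a} \<le> prob {x \<in> space M. exp (- weighted_sum m x) \<le> b}"
    by (rule finite_measure_mono) (use ab in auto)
  with ab show "Y_cdf m a \<le> Y_cdf m b"
    by (simp add: prob_exp_neg_weighted_sum_le[OF assms])
qed

lemma Y_cdf_nonneg:
  assumes "m \<ge> 1" "0 \<le> q" "q \<le> 1"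
  shows "0 \<le> Y_cdf m q"
  using mono_onD[OF mono_on_Y_cdf[OF assms(1)], of 0 q] assms by simp

lemma f_dens_nonneg:
  assumes "m \<ge> 1" "q \<in> {0<..<1}"
  shows "0 \<le> f_dens m q"
  by (rule mono_on_imp_deriv_nonneg[OF mono_on_Y_cdf Y_cdf_has_real_derivative]) (use assms in auto)

lemma emeasure_density_f_dens_atMost:
  assumes "m \<ge> 1"
  shows "emeasure (density lborel (\<lambda>q. ennreal (indicator {0..1} q * f_dens m q))) {..c}
           = ennreal (Y_cdf m (max 0 (min c 1)))"
proof -
  define c' where "c' = max 0 (min c 1)"
  have c': "0 \<le> c'" "c' \<le> 1"
    by (auto simp: c'_def)
  have "emeasure (density lborel (\<lambda>q. ennreal (indicator {0..1} q * f_dens m q))) {..c}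
      = \<integral>\<^sup>+q. ennreal (indicator {0..1} q * f_dens m q) * indicator {..c} q \<partial>lborel"
    by (simp add: emeasure_density)
  also have "\<dots> = \<integral>\<^sup>+q. ennreal (indicator {0<..<c'} q * f_dens m q) \<partial>lborel"
    using AE_lborel_singleton[of 0] AE_lborel_singleton[of c']
    by (intro nn_integral_cong_AE, eventually_elim) (auto simp: c'_def indicator_def)
  also have "\<dots> = ennreal (Y_cdf m c' - Y_cdf m 0)"
  proof (rule nn_integral_has_integral_lebesgue)
    show "0 \<le> f_dens m q" if "q \<in> {0<..<c'}" for q
      using f_dens_nonneg[OF assms] that c' by auto
    have "(f_dens m has_integral Y_cdf m c' - Y_cdf m 0) {0..c'}"
      using c' Y_cdf_has_real_derivative by (intro fundamental_theorem_of_calculus)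
        (auto simp: has_real_derivative_iff_has_vector_derivative[symmetric] intro: has_field_derivative_at_within)
    then show "(f_dens m has_integral Y_cdf m c' - Y_cdf m 0) {0<..<c'}"
      by (simp add: has_integral_Icc_iff_Ioo)
  qed
  finally show ?thesis
    by (simp add: c'_def)
qed

lemma distr_exp_neg_weighted_sum:
  assumes "m \<ge> 1"
  shows "distr M borel (\<lambda>x. exp (- weighted_sum m x))
           = density lborel (\<lambda>q. ennreal (indicator {0..1} q * f_dens m q))"
    (is "?Y = ?D")
proof (rule cdf_unique)
  have "emeasure ?D UNIV = emeasure ?D {..1}"
    by (simp add: emeasure_density) (auto intro!: nn_integral_cong simp: indicator_def)
  also have "\<dots> = 1"
    using assms by (simp add: emeasure_density_f_dens_atMost Y_cdf_1)
  finally have "prob_space ?D"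
    by (intro prob_spaceI) simp
  then show "real_distribution ?D"
    by (simp add: real_distribution_def real_distribution_axioms_def)
  show "real_distribution ?Y"
    by (rule real_distribution_distr) simp
  show "cdf ?Y = cdf ?D"
  proof
    fix c
    have "cdf ?Y c = prob {x \<in> space M. exp (- weighted_sum m x) \<le> c}"
      unfolding cdf_def by (subst measure_distr) (auto intro!: arg_cong[where f = prob])
    also have "\<dots> = Y_cdf m (max 0 (min c 1))"
      by (rule prob_exp_neg_weighted_sum_le[OF assms])
    also have "\<dots> = cdf ?D c"
      using Y_cdf_nonneg[OF assms, of "max 0 (min c 1)"] assms
      by (simp add: cdf_def measure_def emeasure_density_f_dens_atMost)
    finally show "cdf ?Y c = cdf ?D c" .
  qed
qed

end

section \<open>The law of \<open>W\<close>\<close>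

definition W_cdf :: "real \<Rightarrow> real" where
  "W_cdf q = (\<Sum>l. 2 * (-1) ^ l * q ^ (Suc l) ^ 2)"

lemma summable_power_Suc_square:
  fixes q :: real
  assumes "0 \<le> q" "q < 1"
  shows "summable (\<lambda>l. q ^ (Suc l) ^ 2)"
proof (rule summable_comparison_test'[of "\<lambda>l. q ^ Suc l" 0])
  show "summable (\<lambda>l. q ^ Suc l)"
    using assms by (simp add: summable_geometric)
  show "norm (q ^ (Suc l) ^ 2) \<le> q ^ Suc l" for l
  proof -
    have "Suc l \<le> (Suc l) ^ 2"
      by (simp add: power2_eq_square)
    then show ?thesis
      using assms by (simp add: power_decreasing del: power_Suc)
  qed
qed

lemma has_sum_int_even:
  fixes f :: "int \<Rightarrow> real"
  assumes even: "\<And>n. f (- n) = f n"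
    and pos: "((\<lambda>l. f (int (Suc l))) has_sum S) UNIV"
  shows "(f has_sum f 0 + 2 * S) UNIV"
proof -
  have "(f has_sum f 0) {0}"
    using has_sum_finite[of "{0}" f] by simp
  moreover have "(f has_sum S) (range (\<lambda>l. int (Suc l)))"
    using pos by (subst has_sum_reindex) (auto simp: inj_def o_def)
  moreover have "(f has_sum S) (range (\<lambda>l. - int (Suc l)))"
    using pos by (subst has_sum_reindex) (auto simp: inj_def o_def even simp del: of_nat_Suc)
  ultimately have "(f has_sum f 0 + S + S) ({0} \<union> range (\<lambda>l. int (Suc l)) \<union> range (\<lambda>l. - int (Suc l)))"
    by (intro has_sum_Un_disjoint) auto
  moreover have "{0} \<union> range (\<lambda>l. int (Suc l)) \<union> range (\<lambda>l. - int (Suc l)) = UNIV"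
  proof (intro set_eqI iffI)
    fix n :: int
    consider "n = 0" | "n = int (Suc (nat n - 1))" | "n = - int (Suc (nat (- n) - 1))"
      by linarith
    then show "n \<in> {0} \<union> range (\<lambda>l. int (Suc l)) \<union> range (\<lambda>l. - int (Suc l))"
      by cases blast+
  qed simp
  ultimately show ?thesis
    by (simp add: algebra_simps)
qed

lemma W_cdf_eq_one_minus_Theta:
  fixes q :: real
  assumes "\<bar>q\<bar> < 1"
  shows "W_cdf q = 1 - Theta q"
proof -
  define f where "f n = (-1) ^ nat \<bar>n\<bar> * q ^ nat (n ^ 2)" for n :: int
  define b where "b l = (-1) ^ Suc l * q ^ (Suc l) ^ 2" for l
  have b_norm: "summable (\<lambda>l. norm (b l))"
    using summable_power_Suc_square[of "\<bar>q\<bar>"] assms by (simp add: b_def abs_mult power_abs)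
  then have b_summable: "summable b"
    by (rule summable_norm_cancel)
  have "(b has_sum (\<Sum>l. b l)) UNIV"
    using b_norm b_summable by (intro norm_summable_imp_has_sum summable_sums)
  moreover have "(\<lambda>l. f (int (Suc l))) = b"
    by (simp add: f_def b_def fun_eq_iff nat_power_eq del: of_nat_Suc)
  ultimately have "(f has_sum f 0 + 2 * (\<Sum>l. b l)) UNIV"
    by (intro has_sum_int_even) (simp_all add: f_def)
  then have "Theta q = 1 + 2 * (\<Sum>l. b l)"
    by (simp add: Theta_def f_def[abs_def, symmetric] infsumI) (simp add: f_def)
  moreover have "W_cdf q = - 2 * (\<Sum>l. b l)"
  proof -
    have "(\<lambda>l. 2 * (-1) ^ l * q ^ (Suc l) ^ 2) = (\<lambda>l. - 2 * b l)"
      by (simp add: b_def fun_eq_iff)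
    then show ?thesis
      using b_summable by (simp add: W_cdf_def suminf_minus suminf_mult summable_mult)
  qed
  ultimately show ?thesis
    by simp
qed

lemma Y_cdf_eq_suminf: "Y_cdf m q = (\<Sum>l. hypoexp_coeff m (Suc l) * q ^ (Suc l) ^ 2)"
proof -
  have "hypoexp_coeff m (Suc l) = 0" if "l \<notin> {..<m}" for l
    using that by (simp add: hypoexp_coeff_def binom_ratio_def)
  then have "(\<Sum>l. hypoexp_coeff m (Suc l) * q ^ (Suc l) ^ 2) = (\<Sum>l<m. hypoexp_coeff m (Suc l) * q ^ (Suc l) ^ 2)"
    by (intro suminf_finite) auto
  also have "\<dots> = Y_cdf m q"
    by (simp add: Y_cdf_def sum.atLeast1_atMost_eq)
  finally show ?thesis ..
qed

lemma Y_cdf_tendsto_W_cdf: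
  fixes q :: real
  assumes "\<bar>q\<bar> < 1"
  shows "(\<lambda>m. Y_cdf m q) \<longlonglongrightarrow> W_cdf q"
  unfolding Y_cdf_eq_suminf W_cdf_def
proof (rule tannerys_theorem[THEN conjunct2, THEN conjunct2])
  show "(\<lambda>m. hypoexp_coeff m (Suc l) * q ^ (Suc l) ^ 2) \<longlonglongrightarrow> 2 * (-1) ^ l * q ^ (Suc l) ^ 2" for l
  proof -
    have "(\<lambda>m. 2 * (-1) ^ l * binom_ratio m (Suc l) * q ^ (Suc l) ^ 2) \<longlonglongrightarrow> 2 * (-1) ^ l * 1 * q ^ (Suc l) ^ 2"
      by (intro tendsto_intros binom_ratio_tendsto_1)
    then show ?thesis
      by (simp add: hypoexp_coeff_def)
  qed
  show "eventually (\<lambda>(l, m). norm (hypoexp_coeff m (Suc l) * q ^ (Suc l) ^ 2) \<le> 2 * \<bar>q\<bar> ^ (Suc l) ^ 2)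
      (at_top \<times>\<^sub>F sequentially)"
    using abs_hypoexp_coeff_le by (intro always_eventually) (auto simp: abs_mult power_abs intro!: mult_right_mono)
  show "summable (\<lambda>l. 2 * \<bar>q\<bar> ^ (Suc l) ^ 2)"
    using summable_power_Suc_square[of "\<bar>q\<bar>"] assms by simp
qed simp

lemma isCont_W_cdf:
  fixes q :: real
  assumes "\<bar>q\<bar> < 1"
  shows "isCont W_cdf q"
proof -
  define r where "r = (\<bar>q\<bar> + 1) / 2"
  have r: "\<bar>q\<bar> < r" "r < 1"
    using assms by (simp_all add: r_def)
  have "uniform_limit {-r..r} (\<lambda>n x. \<Sum>l<n. 2 * (-1) ^ l * x ^ (Suc l) ^ 2) W_cdf sequentially"
    unfolding W_cdf_def[abs_def]
  proof (rule Weierstrass_m_test)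
    show "norm (2 * (-1) ^ l * x ^ (Suc l) ^ 2) \<le> 2 * r ^ (Suc l) ^ 2" if "x \<in> {-r..r}" for l x
      using that by (simp add: abs_mult power_abs power_mono abs_le_iff)
    show "summable (\<lambda>l. 2 * r ^ (Suc l) ^ 2)"
      using summable_power_Suc_square[of r] r by simp
  qed
  then have "continuous_on {-r..r} W_cdf"
    by (rule uniform_limit_theorem[rotated]) (auto intro!: always_eventually continuous_intros)
  then show ?thesis
    using r by (intro continuous_on_interior[of "{-r..r}"]) auto
qed

lemma AE_summable_nonneg:
  fixes X :: "nat \<Rightarrow> 'a \<Rightarrow> real"
  assumes integrable: "\<And>l. integrable M (X l)"
    and nonneg: "AE x in M. \<forall>l. 0 \<le> X l x"
    and summable: "summable (\<lambda>l. integral\<^sup>L M (X l))"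
  shows "AE x in M. summable (\<lambda>l. X l x)"
proof -
  have [measurable]: "X l \<in> borel_measurable M" for l
    using integrable by (rule borel_measurable_integrable)
  have "(\<integral>\<^sup>+x. (\<Sum>l. ennreal (X l x)) \<partial>M) = (\<Sum>l. \<integral>\<^sup>+x. ennreal (X l x) \<partial>M)"
    by (rule nn_integral_suminf) measurable
  also have "\<dots> = (\<Sum>l. ennreal (integral\<^sup>L M (X l)))"
    using nonneg by (intro suminf_cong nn_integral_eq_integral integrable) (auto elim: eventually_mono)
  also have "\<dots> = ennreal (\<Sum>l. integral\<^sup>L M (X l))"
    using nonneg summable by (intro suminf_ennreal2) (auto intro!: integral_nonneg_AE elim: eventually_mono)
  finally have "AE x in M. (\<Sum>l. ennreal (X l x)) \<noteq> \<infinity>"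
    by (intro nn_integral_noteq_infinite) auto
  then show ?thesis
    using nonneg by eventually_elim (auto intro: summable_suminf_not_top)
qed

context iid_exponential
begin

definition weighted_series :: "'a \<Rightarrow> real" where
  "weighted_series x = (\<Sum>l. eps (Suc l) x / real (Suc l) ^ 2)"

lemma weighted_series_measurable [measurable]: "weighted_series \<in> borel_measurable M"
  unfolding weighted_series_def by measurable

lemma weighted_sum_eq_sum_lessThan: "weighted_sum m x = (\<Sum>l<m. eps (Suc l) x / real (Suc l) ^ 2)"
  unfolding weighted_sum_def by (simp add: sum.atLeast1_atMost_eq del: of_nat_Suc)

lemma AE_summable_weighted: "AE x in M. summable (\<lambda>l. eps (Suc l) x / real (Suc l) ^ 2)"
proof (rule AE_summable_nonneg)
  have "integrable M (\<lambda>x. eps l x ^ 1)" for l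
    by (rule erlang_ith_moment_integrable[OF _ eps_exponential]) simp
  then show "integrable M (\<lambda>x. eps (Suc l) x / real (Suc l) ^ 2)" for l
    by simp
  show "AE x in M. \<forall>l. 0 \<le> eps (Suc l) x / real (Suc l) ^ 2"
    using AE_eps_nonneg by eventually_elim simp
  have "expectation (eps l) = 1" for l
    using exponential_distributed_expectation[of 1 "eps l"] eps_exponential[of l] by simp
  moreover have "summable (\<lambda>l. 1 / real (Suc l) ^ 2)"
    using inverse_power_summable[of 2, where 'a = real] summable_Suc_iff[of "\<lambda>n. 1 / real n ^ 2"]
    by (simp add: inverse_eq_divide)
  ultimately show "summable (\<lambda>l. expectation (\<lambda>x. eps (Suc l) x / real (Suc l) ^ 2))"
    by simp
qed

lemma AE_weighted_sum_le_series: "AE x in M. \<forall>m. weighted_sum m x \<le> weighted_series x"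
  using AE_eps_nonneg AE_summable_weighted
  by eventually_elim (auto simp: weighted_sum_eq_sum_lessThan weighted_series_def intro!: sum_le_suminf)

lemma AE_weighted_sum_tendsto_series: "AE x in M. (\<lambda>m. weighted_sum m x) \<longlonglongrightarrow> weighted_series x"
  using AE_summable_weighted
  by eventually_elim (simp add: weighted_sum_eq_sum_lessThan weighted_series_def summable_LIMSEQ)

lemma AE_weighted_series_nonneg: "AE x in M. 0 \<le> weighted_series x"
  using AE_weighted_sum_le_series AE_weighted_sum_nonneg[of 0]
  by eventually_elim (auto intro: order.trans)

lemma W_cdf_le_prob_exp_neg_weighted_series:
  assumes "0 \<le> q" "q < 1"
  shows "W_cdf q \<le> prob {x \<in> space M. exp (- weighted_series x) \<le> q}"
proof (rule LIMSEQ_le_const2[OF Y_cdf_tendsto_W_cdf])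
  show "\<exists>N. \<forall>m\<ge>N. Y_cdf m q \<le> prob {x \<in> space M. exp (- weighted_series x) \<le> q}"
  proof (intro exI allI impI)
    fix m :: nat
    assume m: "1 \<le> m"
    have "prob {x \<in> space M. exp (- weighted_sum m x) \<le> q} \<le> prob {x \<in> space M. exp (- weighted_series x) \<le> q}"
      using AE_weighted_sum_le_series
      by (intro finite_measure_mono_AE) (auto elim!: eventually_mono intro: order.trans[rotated])
    then show "Y_cdf m q \<le> prob {x \<in> space M. exp (- weighted_series x) \<le> q}"
      using assms by (simp add: prob_exp_neg_weighted_sum_le[OF m])
  qed
qed (use assms in auto)

lemma AE_indicator_exp_neg_series_le_liminf:
  assumes "q < q'"
  shows "AE x in M. indicator {x \<in> space M. exp (- weighted_series x) \<le> q} x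
           \<le> liminf (\<lambda>m. indicator {x \<in> space M. exp (- weighted_sum m x) \<le> q'} x :: ennreal)"
  using AE_weighted_sum_tendsto_series
proof eventually_elim
  case (elim x)
  show ?case
  proof (cases "x \<in> space M \<and> exp (- weighted_series x) \<le> q")
    case True
    have "(\<lambda>m. exp (- weighted_sum m x)) \<longlonglongrightarrow> exp (- weighted_series x)"
      by (intro tendsto_intros elim)
    then have "eventually (\<lambda>m. exp (- weighted_sum m x) < q') sequentially"
      using True assms by (auto intro: order_tendstoD(2))
    then have "eventually (\<lambda>m. indicator {x \<in> space M. exp (- weighted_sum m x) \<le> q'} x = (1 :: ennreal))
        sequentially"
      by (rule eventually_mono) (use True in simp)
    then have "liminf (\<lambda>m. indicator {x \<in> space M. exp (- weighted_sum m x) \<le> q'} x :: ennreal) = 1"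
      by (intro lim_imp_Liminf tendsto_eventually) simp_all
    then show ?thesis
      by (simp add: indicator_def)
  qed simp
qed

lemma prob_exp_neg_weighted_series_le_W_cdf_greater:
  assumes "0 \<le> q" "q < q'" "q' < 1"
  shows "prob {x \<in> space M. exp (- weighted_series x) \<le> q} \<le> W_cdf q'"
proof -
  define A where "A m = {x \<in> space M. exp (- weighted_sum m x) \<le> q'}" for m
  have [measurable]: "A m \<in> sets M" for m
    unfolding A_def by measurable
  have "emeasure M {x \<in> space M. exp (- weighted_series x) \<le> q}
      \<le> \<integral>\<^sup>+x. liminf (\<lambda>m. indicator (A m) x) \<partial>M"
    using AE_indicator_exp_neg_series_le_liminf[OF assms(2)]
    by (subst nn_integral_indicator[symmetric], measurable, intro nn_integral_mono_AE) (simp add: A_def)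
  also have "\<dots> \<le> liminf (\<lambda>m. emeasure M (A m))"
    using nn_integral_liminf[of "\<lambda>m. indicator (A m)" M] by simp
  also have "liminf (\<lambda>m. emeasure M (A m)) = ennreal (W_cdf q')"
  proof (intro lim_imp_Liminf)
    have "(\<lambda>m. ennreal (Y_cdf m q')) \<longlonglongrightarrow> ennreal (W_cdf q')"
      using assms by (intro tendsto_ennrealI Y_cdf_tendsto_W_cdf) simp
    moreover have "eventually (\<lambda>m. ennreal (Y_cdf m q') = emeasure M (A m)) sequentially"
      using eventually_ge_at_top[of 1]
      by eventually_elim (use assms in \<open>simp add: A_def emeasure_eq_measure prob_exp_neg_weighted_sum_le\<close>)
    ultimately show "(\<lambda>m. emeasure M (A m)) \<longlonglongrightarrow> ennreal (W_cdf q')"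
      by (rule Lim_transform_eventually)
  qed simp
  finally have "ennreal (prob {x \<in> space M. exp (- weighted_series x) \<le> q}) \<le> ennreal (W_cdf q')"
    by (simp add: emeasure_eq_measure)
  moreover have "0 \<le> W_cdf q'"
    using assms Y_cdf_nonneg[of _ q']
    by (intro LIMSEQ_le_const[OF Y_cdf_tendsto_W_cdf]) (auto intro!: exI[of _ 1])
  ultimately show ?thesis
    by simp
qed

lemma prob_exp_neg_weighted_series_le:
  assumes "0 \<le> q" "q < 1"
  shows "prob {x \<in> space M. exp (- weighted_series x) \<le> q} = W_cdf q"
proof (rule antisym)
  have "(W_cdf \<longlongrightarrow> W_cdf q) (at_right q)"
    using isCont_W_cdf[of q] assms by (auto simp: isCont_def intro: tendsto_mono[OF at_le])
  moreover have "eventually (\<lambda>q'. prob {x \<in> space M. exp (- weighted_series x) \<le> q} \<le> W_cdf q') (at_right q)"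
    using assms by (auto simp: eventually_at_right[of _ 1] intro: prob_exp_neg_weighted_series_le_W_cdf_greater)
  ultimately show "prob {x \<in> space M. exp (- weighted_series x) \<le> q} \<le> W_cdf q"
    using trivial_limit_at_right_real[of q] by (intro tendsto_lowerbound)
  show "W_cdf q \<le> prob {x \<in> space M. exp (- weighted_series x) \<le> q}"
    using assms by (rule W_cdf_le_prob_exp_neg_weighted_series)
qed

end

theorem corollary6:
  fixes M :: "'a measure" and eps :: "nat \<Rightarrow> 'a \<Rightarrow> real"
  assumes "prob_space M"
    and "prob_space.indep_vars M (\<lambda>_. borel) eps UNIV"
    and "\<And>l. distributed M lborel (eps l) (exponential_density 1)"
  shows "(\<forall>m\<ge>1. distr M borel (\<lambda>x. exp (- (\<Sum>l=1..m. eps l x / real l ^ 2)))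
              = density lborel (\<lambda>q. ennreal (indicator {0..1} q * f_dens m q)))
    \<and> (AE x in M. exp (- (\<Sum>l. eps (Suc l) x / real (Suc l) ^ 2)) \<in> {0..1})
    \<and> (\<forall>q. 0 \<le> q \<and> q < 1 \<longrightarrow>
           measure M {x \<in> space M. exp (- (\<Sum>l. eps (Suc l) x / real (Suc l) ^ 2)) \<le> q}
             = 1 - Theta q)"
proof -
  interpret iid_exponential M eps
    using assms by (simp add: iid_exponential_def iid_exponential_axioms_def)
  have sum: "(\<Sum>l=1..m. eps l x / real l ^ 2) = weighted_sum m x" for m x
    by (simp add: weighted_sum_def)
  have series: "(\<Sum>l. eps (Suc l) x / real (Suc l) ^ 2) = weighted_series x" for x
    by (simp add: weighted_series_def)
  show ?thesis
    unfolding sum series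
  proof (intro conjI allI impI)
    show "distr M borel (\<lambda>x. exp (- weighted_sum m x))
        = density lborel (\<lambda>q. ennreal (indicator {0..1} q * f_dens m q))" if "1 \<le> m" for m
      using that by (rule distr_exp_neg_weighted_sum)
    show "AE x in M. exp (- weighted_series x) \<in> {0..1}"
      using AE_weighted_series_nonneg by eventually_elim simp
    show "prob {x \<in> space M. exp (- weighted_series x) \<le> q} = 1 - Theta q" if "0 \<le> q \<and> q < 1" for q
      using that by (simp add: prob_exp_neg_weighted_series_le W_cdf_eq_one_minus_Theta)
  qed
qed

end
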